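(* Let $\mathbb{E},\mathbb{F}$ be finite-dimensional real inner-product spaces, $K\subseteq\mathbb{E}$ a pointed closed convex cone with nonempty interior, $\mathcal{A}\colon\mathbb{E}\to\mathbb{F}^*$ linear, $c\in\mathbb{E}^*$, $b\in\mathbb{F}^*$. Set $\mathcal{C}_P:=\{x\in K : \mathcal{A}(x)=b\}$ and $\mathcal{C}_D:=\{s\in K^* : s\in\operatorname{Im}(\mathcal{A}^* )-c\}$. Suppose $\mathcal{C}_P\cap\operatorname{int}(K)\neq\emptyset$ and let $\bar x\in\mathcal{C}_P$. Then there exists $\bar s\in\mathcal{C}_D$ such that $(\bar x,\bar s)$ is strictly complementary if and only if $c\in\operatorname{relint}(N_{\mathcal{C}_P}(\bar x))$.
   Context: $K^*:=\{s\in\mathbb{E}^*:\langle s,x\rangle\ge0\ \forall x\in K\}$. A pair $(\bar x,\bar s)\in\mathcal{C}_P\times\mathcal{C}_D$ is strictly complementary if there is a face $F$ of $K$ with $\bar x\in\operatorname{relint}(F)$ and $\bar s\in\operatorname{relint}(F^{\triangle})$, where $F^{\triangle}:=K^*\cap F^\perp$ is the conjugate face. The normal cone of a convex set $\mathcal{C}$ at $\bar x\in\mathcal{C}$ is $N_{\mathcal{C}}(\bar x):=\{c\in\mathbb{E}^* : \langle c,x\rangle\le\langle c,\bar x\rangle\ \forall x\in\mathcal{C}\}$; $\operatorname{relint}$ is the relative interior. *)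

theory Defs
  imports "HOL-Analysis.Analysis"
begin

text \<open>Dual spaces are identified with the spaces themselves via the inner product
  (finite-dimensional real inner-product spaces = euclidean_space).\<close>

definition dual_cone :: "'a::real_inner set \<Rightarrow> 'a set" where
  "dual_cone K = {s. \<forall>x\<in>K. s \<bullet> x \<ge> 0}"

definition conjugate_face :: "'a::real_inner set \<Rightarrow> 'a set \<Rightarrow> 'a set" where
  "conjugate_face K F = dual_cone K \<inter> {s. \<forall>x\<in>F. s \<bullet> x = 0}"

definition normal_cone :: "'a::real_inner set \<Rightarrow> 'a \<Rightarrow> 'a set" where
  "normal_cone C xb = {c. \<forall>x\<in>C. c \<bullet> x \<le> c \<bullet> xb}"

definition strictly_complementary :: "'a::euclidean_space set \<Rightarrow> 'a \<Rightarrow> 'a \<Rightarrow> bool" where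
  "strictly_complementary K xb sb \<longleftrightarrow>
     (\<exists>F. F face_of K \<and> xb \<in> rel_interior F \<and> sb \<in> rel_interior (conjugate_face K F))"

definition pointed_cone :: "'a::real_vector set \<Rightarrow> bool" where
  "pointed_cone K \<longleftrightarrow> K \<inter> uminus ` K \<subseteq> {0}"

end

theory Submission
  imports Defs
begin

text \<open>Since \<open>\<C>\<^sub>P = K \<inter> {x. A x = b}\<close> and the Slater point lies in the interior of \<open>K\<close>,
  the normal cone of the intersection is the sum of the normal cones:
  \<open>N(xb) = - (K\<^sup>* \<inter> xb\<^sup>\<bottom>) + Im A\<^sup>*\<close>. Taking relative interiors of this sum of a convex set and
  a subspace, \<open>c\<close> lies in \<open>relint N(xb)\<close> iff \<open>A\<^sup>* y - c \<in> relint (K\<^sup>* \<inter> xb\<^sup>\<bottom>)\<close> for some \<open>y\<close>.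
  Finally, if \<open>F\<close> is the face of \<open>K\<close> with \<open>xb \<in> relint F\<close>, its conjugate face is exactly
  \<open>K\<^sup>* \<inter> xb\<^sup>\<bottom>\<close>, so the latter condition is strict complementarity of \<open>(xb, A\<^sup>* y - c)\<close>.\<close>

lemma normal_cone_Int_separation:
  fixes S T :: "'a::euclidean_space set"
  assumes "convex S" "convex T" "x \<in> S" "x \<in> T" "c \<in> normal_cone (S \<inter> T) x"
  obtains a \<gamma> where "(a, \<gamma>) \<noteq> 0" "\<gamma> \<ge> 0"
    "\<And>y. y \<in> S \<Longrightarrow> a \<bullet> y + \<gamma> * (c \<bullet> (y - x)) \<le> a \<bullet> x"
    "\<And>y. y \<in> T \<Longrightarrow> a \<bullet> y \<ge> a \<bullet> x"
proof -
  define W1 where "W1 = (S \<times> UNIV) \<inter> {p. (- c, 1::real) \<bullet> p \<le> - (c \<bullet> x)}"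
  define W2 where "W2 = T \<times> {0::real<..}"
  have W1_iff: "(y, \<alpha>) \<in> W1 \<longleftrightarrow> y \<in> S \<and> \<alpha> \<le> c \<bullet> (y - x)" for y \<alpha>
    by (auto simp: W1_def inner_diff_right)
  have "convex W1"
    unfolding W1_def by (intro convex_Int convex_Times convex_halfspace_le) (use assms in auto)
  moreover have "convex W2"
    unfolding W2_def by (intro convex_Times) (use assms in auto)
  moreover have "W1 \<inter> W2 = {}"
    using assms(5) by (force simp: W1_iff W2_def normal_cone_def inner_diff_right)
  moreover have "(x, 0) \<in> W1" "(x, 1) \<in> W2"
    using assms by (auto simp: W1_iff W2_def)
  ultimately obtain p \<beta> where "p \<noteq> 0" and p1: "\<And>z. z \<in> W1 \<Longrightarrow> p \<bullet> z \<le> \<beta>"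
    and p2: "\<And>z. z \<in> W2 \<Longrightarrow> p \<bullet> z \<ge> \<beta>"
    using separating_hyperplane_sets[of W1 W2] by blast
  obtain a \<gamma> where p: "p = (a, \<gamma>)" by fastforce
  have aS: "a \<bullet> y + \<gamma> * (c \<bullet> (y - x)) \<le> \<beta>" if "y \<in> S" for y
    using p1[of "(y, c \<bullet> (y - x))"] that by (simp add: W1_iff p)
  have aT: "a \<bullet> y \<ge> \<beta>" if "y \<in> T" for y
  proof -
    have "closure W2 \<subseteq> {z. p \<bullet> z \<ge> \<beta>}"
      using p2 by (intro closure_minimal) (auto intro: closed_halfspace_ge)
    moreover have "(y, 0) \<in> closure W2"
      using that closure_subset by (auto simp: W2_def closure_Times)
    ultimately show ?thesis by (auto simp: p)
  qed
  have ax: "a \<bullet> x = \<beta>"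
    using aS[OF \<open>x \<in> S\<close>] aT[OF \<open>x \<in> T\<close>] by simp
  have "\<gamma> \<ge> 0"
  proof (rule ccontr)
    assume "\<not> \<gamma> \<ge> 0"
    then have "(x, 1 / \<gamma>) \<in> W1" by (simp add: W1_iff \<open>x \<in> S\<close>)
    then show False using p1 \<open>\<not> \<gamma> \<ge> 0\<close> ax by (fastforce simp: p)
  qed
  then show ?thesis
    using that \<open>p \<noteq> 0\<close> aS aT by (simp add: p ax)
qed

lemma normal_cone_Int:
  fixes S T :: "'a::euclidean_space set"
  assumes "convex S" "convex T" "interior S \<inter> T \<noteq> {}" "x \<in> S" "x \<in> T"
  shows "normal_cone (S \<inter> T) x = normal_cone S x + normal_cone T x"
proof
  show "normal_cone S x + normal_cone T x \<subseteq> normal_cone (S \<inter> T) x"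
    by (auto simp: normal_cone_def set_plus_def inner_add_left intro!: add_mono)
next
  show "normal_cone (S \<inter> T) x \<subseteq> normal_cone S x + normal_cone T x"
  proof
    fix c assume "c \<in> normal_cone (S \<inter> T) x"
    then obtain a \<gamma> where "(a, \<gamma>) \<noteq> 0" "\<gamma> \<ge> 0"
      and aS: "\<And>y. y \<in> S \<Longrightarrow> a \<bullet> y + \<gamma> * (c \<bullet> (y - x)) \<le> a \<bullet> x"
      and aT: "\<And>y. y \<in> T \<Longrightarrow> a \<bullet> y \<ge> a \<bullet> x"
      using normal_cone_Int_separation assms(1,2,4,5) by blast
    \<comment> \<open>The Slater point rules out a vertical separating hyperplane.\<close>
    have "\<gamma> \<noteq> 0"
    proof
      assume "\<gamma> = 0"
      then have "a \<noteq> 0" using \<open>(a, \<gamma>) \<noteq> 0\<close> by (simp add: zero_prod_def)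
      have "interior S \<subseteq> interior {y. a \<bullet> y \<le> a \<bullet> x}"
        using aS \<open>\<gamma> = 0\<close> by (intro interior_mono) auto
      then have "interior S \<inter> T = {}"
        using aT \<open>a \<noteq> 0\<close> by force
      with assms(3) show False ..
    qed
    with \<open>\<gamma> \<ge> 0\<close> have "\<gamma> > 0" by simp
    define u where "u = c + a /\<^sub>R \<gamma>"
    have "u \<bullet> y \<le> u \<bullet> x" if "y \<in> S" for y
    proof -
      have "\<gamma> * (u \<bullet> y) \<le> \<gamma> * (u \<bullet> x)"
        using aS[OF that] \<open>\<gamma> > 0\<close>
        by (simp add: u_def inner_add_left inner_diff_right distrib_left mult.assoc[symmetric]
            right_diff_distrib)
      then show ?thesis using \<open>\<gamma> > 0\<close> by simp
    qed
    then have "u \<in> normal_cone S x"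
      by (simp add: normal_cone_def)
    moreover have "- a /\<^sub>R \<gamma> \<in> normal_cone T x"
      using aT \<open>\<gamma> > 0\<close> by (simp add: normal_cone_def divide_right_mono)
    ultimately have "u + - a /\<^sub>R \<gamma> \<in> normal_cone S x + normal_cone T x"
      by (rule set_plus_intro)
    then show "c \<in> normal_cone S x + normal_cone T x"
      by (simp add: u_def)
  qed
qed

lemma normal_cone_linear_level_set:
  fixes A :: "'a::euclidean_space \<Rightarrow> 'b::euclidean_space"
  assumes "linear A" "A x = b"
  shows "normal_cone {y. A y = b} x = range (adjoint A)"
proof
  show "normal_cone {y. A y = b} x \<subseteq> range (adjoint A)"
  proof
    fix c assume c: "c \<in> normal_cone {y. A y = b} x"
    have "c \<bullet> l = 0" if "A l = 0" for l
    proof -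
      have "A (x + l) = b" "A (x - l) = b"
        using assms that by (simp_all add: linear_add linear_diff)
      then have "c \<bullet> (x + l) \<le> c \<bullet> x" "c \<bullet> (x - l) \<le> c \<bullet> x"
        using c by (auto simp: normal_cone_def)
      then show ?thesis by (simp add: inner_add_right inner_diff_right)
    qed
    then have "c \<in> (A -` {0})\<^sup>\<bottom>"
      by (auto simp: orthogonal_comp_def orthogonal_def inner_commute)
    also have "\<dots> = range (adjoint A)"
      by (simp add: ker_orthogonal_comp_adjoint[OF assms(1)] orthogonal_comp_self
          linear_subspace_image[OF adjoint_linear[OF assms(1)] subspace_UNIV])
    finally show "c \<in> range (adjoint A)" .
  qed
next
  show "range (adjoint A) \<subseteq> normal_cone {y. A y = b} x"
    using assms by (auto simp: normal_cone_def inner_commute[of "adjoint A _"] adjoint_works)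
qed

lemma normal_cone_convex_cone:
  assumes "convex_cone K" "x \<in> K"
  shows "normal_cone K x = uminus ` (dual_cone K \<inter> {s. s \<bullet> x = 0})"
proof
  show "normal_cone K x \<subseteq> uminus ` (dual_cone K \<inter> {s. s \<bullet> x = 0})"
  proof
    fix c assume c: "c \<in> normal_cone K x"
    have "0 \<in> K" "2 *\<^sub>R x \<in> K"
      using assms by (auto intro: convex_cone_contains_0 convex_cone_scaleR)
    then have "c \<bullet> 0 \<le> c \<bullet> x" "c \<bullet> (2 *\<^sub>R x) \<le> c \<bullet> x"
      using c by (auto simp: normal_cone_def)
    then have "c \<bullet> x = 0" by simp
    then have "- c \<in> dual_cone K \<inter> {s. s \<bullet> x = 0}"
      using c by (auto simp: normal_cone_def dual_cone_def)
    then show "c \<in> uminus ` (dual_cone K \<inter> {s. s \<bullet> x = 0})"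
      by (metis image_eqI minus_minus)
  qed
qed (auto simp: normal_cone_def dual_cone_def)

lemma normal_cone_cone_Int_linear_level_set:
  fixes K :: "'a::euclidean_space set" and A :: "'a \<Rightarrow> 'b::euclidean_space"
  assumes "convex_cone K" "linear A" "interior K \<inter> {y. A y = b} \<noteq> {}" "x \<in> K" "A x = b"
  shows "normal_cone (K \<inter> {y. A y = b}) x
           = uminus ` (dual_cone K \<inter> {s. s \<bullet> x = 0}) + range (adjoint A)"
proof -
  have "convex K"
    using assms(1) by (simp add: convex_cone_def)
  moreover have "convex {y. A y = b}"
    using convex_linear_vimage[OF assms(2) convex_singleton, of b] by (simp add: vimage_def)
  ultimately show ?thesis
    using assms by (simp add: normal_cone_Int normal_cone_convex_cone normal_cone_linear_level_set)
qed

lemma rel_interior_negations_plus_subspace: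
  fixes G L :: "'a::euclidean_space set"
  assumes "convex G" "subspace L"
  shows "rel_interior (uminus ` G + L) = uminus ` rel_interior G + L"
proof -
  have "rel_interior (uminus ` G) = uminus ` rel_interior G"
    by (rule rel_interior_injective_linear_image)
      (auto simp: inj_def bounded_linear_minus[OF bounded_linear_ident])
  then show ?thesis
    using assms by (simp add: rel_interior_sum convex_negations subspace_imp_convex
        rel_interior_affine subspace_imp_affine)
qed

lemma mem_negations_plus_range_iff:
  fixes f :: "'b \<Rightarrow> 'a::ab_group_add"
  shows "c \<in> uminus ` S + range f \<longleftrightarrow> (\<exists>y. f y - c \<in> S)"
proof
  assume "c \<in> uminus ` S + range f"
  then obtain s y where "s \<in> S" "c = f y - s"
    by (auto simp: set_plus_def)
  then show "\<exists>y. f y - c \<in> S"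
    by (intro exI[of _ y]) simp
next
  assume "\<exists>y. f y - c \<in> S"
  then obtain y where "f y - c \<in> S" ..
  then have "- (f y - c) + f y \<in> uminus ` S + range f"
    by (intro set_plus_intro imageI rangeI)
  then show "c \<in> uminus ` S + range f" by simp
qed

lemma convex_dual_cone: "convex (dual_cone K)"
  unfolding convex_def dual_cone_def
  by (auto simp: inner_add_left intro!: add_nonneg_nonneg mult_nonneg_nonneg)

lemma conjugate_face_eq:
  assumes "F face_of K" "x \<in> rel_interior F"
  shows "conjugate_face K F = dual_cone K \<inter> {s. s \<bullet> x = 0}"
proof
  show "conjugate_face K F \<subseteq> dual_cone K \<inter> {s. s \<bullet> x = 0}"
    using assms(2) rel_interior_subset by (auto simp: conjugate_face_def)
next
  show "dual_cone K \<inter> {s. s \<bullet> x = 0} \<subseteq> conjugate_face K F"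
  proof (clarify)
    fix s assume s: "s \<in> dual_cone K" "s \<bullet> x = 0"
    have "F \<subseteq> K" using assms(1) face_of_imp_subset by blast
    then have "F \<inter> {y. s \<bullet> y = 0} face_of F"
      using s(1) assms(1) face_of_imp_convex
      by (intro face_of_Int_supporting_hyperplane_ge) (auto simp: dual_cone_def)
    moreover have "x \<in> F \<inter> {y. s \<bullet> y = 0}"
      using assms(2) rel_interior_subset s(2) by (auto simp: inner_commute)
    ultimately have "F \<subseteq> {y. s \<bullet> y = 0}"
      using subset_of_face_of[of _ F F] assms(2) by blast
    then show "s \<in> conjugate_face K F"
      using s(1) by (auto simp: conjugate_face_def)
  qed
qed

lemma face_of_dim_less_not_in_rel_interior:
  fixes S :: "'a::euclidean_space set"
  assumes "convex S" "x \<in> S" "x \<notin> rel_interior S"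
  obtains F where "F face_of S" "x \<in> F" "aff_dim F < aff_dim S"
proof -
  have "rel_interior S \<noteq> {}"
    using assms rel_interior_eq_empty by blast
  then obtain a b where a: "x + a \<in> affine hull (insert x (rel_interior S))" "a \<noteq> 0"
    "a \<bullet> x \<le> b" and ab: "\<And>y. y \<in> rel_interior S \<Longrightarrow> a \<bullet> y \<ge> b"
    using separating_hyperplane_set_point_inaff[OF convex_rel_interior[OF assms(1)] _ assms(3)]
    by blast
  have "affine hull (insert x (rel_interior S)) = affine hull S"
    using assms(1,2) rel_interior_same_affine_hull hull_inc hull_redundant by metis
  with a have "x + a \<in> affine hull S" by simp
  have "closure (rel_interior S) \<subseteq> {y. a \<bullet> y \<ge> a \<bullet> x}"
    using ab a(3) by (intro closure_minimal) (force intro: closed_halfspace_ge)+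
  then have ge: "\<And>y. y \<in> S \<Longrightarrow> a \<bullet> y \<ge> a \<bullet> x"
    using convex_closure_rel_interior[OF assms(1)] closure_subset by blast
  define F where "F = S \<inter> {y. a \<bullet> y = a \<bullet> x}"
  have "F face_of S"
    unfolding F_def using assms(1) ge by (rule face_of_Int_supporting_hyperplane_ge)
  moreover have "F \<noteq> S"
  proof
    assume "F = S"
    then have "affine hull S \<subseteq> {y. a \<bullet> y = a \<bullet> x}"
      unfolding F_def by (intro hull_minimal) (auto simp: affine_hyperplane)
    with \<open>x + a \<in> affine hull S\<close> \<open>a \<noteq> 0\<close> show False
      by (auto simp: inner_add_right)
  qed
  ultimately show ?thesis
    using that face_of_aff_dim_lt[OF assms(1)] assms(2) by (auto simp: F_def)
qed

lemma face_of_rel_interior_exists: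
  fixes S :: "'a::euclidean_space set"
  assumes "convex S" "x \<in> S"
  obtains F where "F face_of S" "x \<in> rel_interior F"
proof -
  have "\<exists>F. F face_of S \<and> x \<in> rel_interior F" if "nat (aff_dim S + 1) = n" "convex S" "x \<in> S"
    for n and S :: "'a set"
    using that
  proof (induction n arbitrary: S rule: less_induct)
    case (less n S)
    show ?case
    proof (cases "x \<in> rel_interior S")
      case True
      then show ?thesis using less.prems face_of_refl by blast
    next
      case False
      then obtain G where G: "G face_of S" "x \<in> G" "aff_dim G < aff_dim S"
        using face_of_dim_less_not_in_rel_interior less.prems by blast
      moreover have "nat (aff_dim G + 1) < n"
        using G(3) aff_dim_geq[of G] less.prems(1) by linarith
      ultimately obtain F where "F face_of G" "x \<in> rel_interior F"
        using less.IH face_of_imp_convex by blast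
      then show ?thesis using G(1) face_of_trans by blast
    qed
  qed
  then show ?thesis using assms that by blast
qed

lemma strictly_complementary_iff_rel_interior:
  fixes K :: "'a::euclidean_space set"
  assumes "convex K" "x \<in> K"
  shows "strictly_complementary K x s \<longleftrightarrow> s \<in> rel_interior (dual_cone K \<inter> {s. s \<bullet> x = 0})"
proof -
  obtain F where "F face_of K" "x \<in> rel_interior F"
    using face_of_rel_interior_exists assms by blast
  then show ?thesis
    unfolding strictly_complementary_def by (metis conjugate_face_eq)
qed

theorem proposition4p1:
  fixes K :: "'e::euclidean_space set"
    and A :: "'e \<Rightarrow> 'f::euclidean_space"
    and c :: 'e and b :: 'f and xb :: 'e
  assumes "convex_cone K" and "closed K" and "pointed_cone K" and "interior K \<noteq> {}"
    and "linear A"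
    and "{x\<in>K. A x = b} \<inter> interior K \<noteq> {}"
    and "xb \<in> {x\<in>K. A x = b}"
  shows "(\<exists>sb\<in>{s\<in>dual_cone K. s \<in> (\<lambda>y. adjoint A y - c) ` UNIV}.
            strictly_complementary K xb sb)
         \<longleftrightarrow> c \<in> rel_interior (normal_cone {x\<in>K. A x = b} xb)"
proof -
  define G where "G = dual_cone K \<inter> {s. s \<bullet> xb = 0}"
  have "convex K" using assms(1) by (simp add: convex_cone_def)
  have xb: "xb \<in> K" "A xb = b" using assms(7) by auto
  have "{x\<in>K. A x = b} = K \<inter> {x. A x = b}" by blast
  then have "normal_cone {x\<in>K. A x = b} xb = uminus ` G + range (adjoint A)"
    using normal_cone_cone_Int_linear_level_set[OF assms(1,5) _ xb] assms(6) G_def by auto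
  moreover have "convex G"
    using convex_hyperplane[of xb 0] unfolding G_def
    by (intro convex_Int convex_dual_cone) (simp add: inner_commute)
  moreover have "subspace (range (adjoint A))"
    by (rule linear_subspace_image[OF adjoint_linear[OF assms(5)] subspace_UNIV])
  ultimately have "c \<in> rel_interior (normal_cone {x\<in>K. A x = b} xb)
                     \<longleftrightarrow> (\<exists>y. adjoint A y - c \<in> rel_interior G)"
    by (simp add: rel_interior_negations_plus_subspace mem_negations_plus_range_iff)
  moreover have "rel_interior G \<subseteq> dual_cone K"
    using rel_interior_subset G_def by blast
  ultimately show ?thesis
    unfolding strictly_complementary_iff_rel_interior[OF \<open>convex K\<close> xb(1)] G_def[symmetric]
    by blast
qed

end
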